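(* Let $\mathcal{X}\subset\mathbb{R}^n$ be convex and compact with $\mathbf{0}\in\mathcal{X}$ and diameter at most $D$ (i.e. $\|\mathbf{x}-\mathbf{y}\|_2\le D$ for all $\mathbf{x},\mathbf{y}\in\mathcal{X}$). Let $f_0,f_1,\dots,f_T:\mathcal{X}\to\mathbb{R}$ be convex differentiable functions and let $\eta\in(0,1]$. Let $\mathbf{x}_0\in\mathcal{X}$ and for $t\ge 0$ define $\mathbf{x}_t'\in\arg\min_{\mathbf{x}\in\mathcal{X}}\langle\nabla f_t(\mathbf{x}_t),\mathbf{x}\rangle$ and $\mathbf{x}_{t+1}=(1-\eta)\mathbf{x}_t+\eta\mathbf{x}_t'$. Then for any $\mathbf{v}_0,\mathbf{v}_1,\dots,\mathbf{v}_T\in\mathcal{X}$ and every $t\in\{1,\dots,T\}$, $$f_t(\mathbf{x}_t)-f_t(\mathbf{v}_t)\le f^{\sup}_{t,t-1}+(1-\eta)\big(f_{t-1}(\mathbf{x}_{t-1})-f_{t-1}(\mathbf{v}_{t-1})\big)+f_{t-1}(\mathbf{v}_{t-1})-f_t(\mathbf{v}_t)+\eta D\|\nabla f_t(\mathbf{x}_t)-\nabla f_{t-1}(\mathbf{x}_{t-1})\|_2,$$ where $f^{\sup}_{t,t-1}=\sup_{\mathbf{x}\in\mathcal{X}}|f_t(\mathbf{x})-f_{t-1}(\mathbf{x})|$.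
   Context: The iteration is the Online Frank-Wolfe (OFW) update with constant step size $\eta$. *)

theory Defs
  imports "HOL-Analysis.Analysis"
begin

end

theory Submission
  imports Defs
begin

text \<open>
  Convexity gives the first-order bound \<open>f\<^sub>t(x\<^sub>t) - f\<^sub>t(x\<^sub>t\<^sub>-\<^sub>1) \<le> \<nabla>f\<^sub>t(x\<^sub>t) \<bullet> (x\<^sub>t - x\<^sub>t\<^sub>-\<^sub>1)
  = \<eta> \<nabla>f\<^sub>t(x\<^sub>t) \<bullet> (x'\<^sub>t\<^sub>-\<^sub>1 - x\<^sub>t\<^sub>-\<^sub>1)\<close>. Replacing \<open>\<nabla>f\<^sub>t(x\<^sub>t)\<close> by \<open>\<nabla>f\<^sub>t\<^sub>-\<^sub>1(x\<^sub>t\<^sub>-\<^sub>1)\<close> costs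
  at most \<open>D\<close> times the norm of their difference (Cauchy-Schwarz); the linear minimisation
  defining \<open>x'\<^sub>t\<^sub>-\<^sub>1\<close> and convexity of \<open>f\<^sub>t\<^sub>-\<^sub>1\<close> then bound the remaining inner product by
  \<open>f\<^sub>t\<^sub>-\<^sub>1(v\<^sub>t\<^sub>-\<^sub>1) - f\<^sub>t\<^sub>-\<^sub>1(x\<^sub>t\<^sub>-\<^sub>1)\<close>. Finally \<open>f\<^sub>t(x\<^sub>t\<^sub>-\<^sub>1) \<le> f\<^sub>t\<^sub>-\<^sub>1(x\<^sub>t\<^sub>-\<^sub>1) + f\<^sup>s\<^sup>u\<^sup>p\<^sub>t\<^sub>,\<^sub>t\<^sub>-\<^sub>1\<close>.
\<close>

lemma convex_on_above_tangent_within: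
  fixes f :: "'a::real_normed_vector \<Rightarrow> real"
  assumes convex: "convex_on X f" and "convex X" and x: "x \<in> X" and y: "y \<in> X"
    and deriv: "(f has_derivative f') (at x within X)"
  shows "f x + f' (y - x) \<le> f y"
proof -
  define \<phi> where "\<phi> u = f (x + u *\<^sub>R (y - x))" for u :: real
  have segment: "x + u *\<^sub>R (y - x) \<in> X" if "u \<in> {0..1}" for u
    using convexD_alt[OF \<open>convex X\<close> x y, of u] that by (simp add: algebra_simps)
  have "((\<lambda>u. x + u *\<^sub>R (y - x)) has_derivative (\<lambda>u. u *\<^sub>R (y - x))) (at 0 within {0<..1})"
    by (auto intro!: derivative_eq_intros)
  moreover have "(f has_derivative f') (at (x + 0 *\<^sub>R (y - x)) within (\<lambda>u. x + u *\<^sub>R (y - x)) ` {0<..1})"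
    using deriv segment by (auto intro: has_derivative_subset)
  ultimately have "(\<phi> has_derivative (\<lambda>u. f' (u *\<^sub>R (y - x)))) (at 0 within {0<..1})"
    using diff_chain_within unfolding \<phi>_def o_def by blast
  moreover have "(\<lambda>u. f' (u *\<^sub>R (y - x))) = (\<lambda>u. f' (y - x) * u)"
    using has_derivative_bounded_linear[OF deriv] by (simp add: linear_simps mult.commute)
  ultimately have "(\<phi> has_field_derivative f' (y - x)) (at 0 within {0<..1})"
    by (simp add: has_field_derivative_def)
  then have quotient: "((\<lambda>u. (\<phi> u - \<phi> 0) / u) \<longlongrightarrow> f' (y - x)) (at 0 within {0<..1})"
    by (simp add: has_field_derivative_iff)
  have "(\<phi> u - \<phi> 0) / u \<le> f y - f x" if "u \<in> {0<..1}" for u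
  proof -
    have "\<phi> u = f ((1 - u) *\<^sub>R x + u *\<^sub>R y)"
      by (simp add: \<phi>_def algebra_simps)
    also have "\<dots> \<le> (1 - u) * f x + u * f y"
      using convex_onD[OF convex, of u x y] that x y by simp
    finally have "\<phi> u - \<phi> 0 \<le> u * (f y - f x)"
      by (simp add: \<phi>_def algebra_simps)
    then show ?thesis
      using that by (simp add: divide_le_eq mult.commute)
  qed
  then have "\<forall>\<^sub>F u in at 0 within {0<..1}. (\<phi> u - \<phi> 0) / u \<le> f y - f x"
    by (simp add: eventually_at_filter)
  moreover have "at (0::real) within {0<..1} \<noteq> bot"
    by (simp add: at_within_eq_bot_iff)
  ultimately have "f' (y - x) \<le> f y - f x"
    using quotient by (rule tendsto_upperbound[rotated])
  then show ?thesis by simp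
qed

lemma convex_on_above_tangent_gderiv:
  fixes f :: "'a::real_inner \<Rightarrow> real"
  assumes "convex_on X f" "convex X" "x \<in> X" "y \<in> X" "GDERIV f x :> G"
  shows "f x + G \<bullet> (y - x) \<le> f y"
  using convex_on_above_tangent_within[of X f x y "\<lambda>h. h \<bullet> G"] assms
  by (simp add: gderiv_def has_derivative_at_withinI inner_commute)

lemma convex_iterates_in:
  assumes "convex X" and "x 0 \<in> X" and "0 \<le> \<eta>" and "\<eta> \<le> 1"
    and "\<And>t. t < T \<Longrightarrow> x' t \<in> X"
    and "\<And>t. t < T \<Longrightarrow> x (Suc t) = (1 - \<eta>) *\<^sub>R x t + \<eta> *\<^sub>R x' t"
  shows "k \<le> T \<Longrightarrow> x k \<in> X"
proof (induction k)
  case (Suc k)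
  then show ?case
    using assms convexD[OF \<open>convex X\<close>, of "x k" "x' k" "1 - \<eta>" \<eta>] by simp
qed (use assms in simp)

lemma continuous_on_compact_le_SUP:
  fixes h :: "'a::topological_space \<Rightarrow> real"
  assumes "compact X" and "continuous_on X h" and "y \<in> X"
  shows "h y \<le> (SUP z\<in>X. h z)"
proof (rule cSUP_upper[OF \<open>y \<in> X\<close>])
  show "bdd_above (h ` X)"
    using compact_continuous_image[OF assms(2,1)]
    by (intro bounded_imp_bdd_above compact_imp_bounded)
qed

lemma frank_wolfe_step:
  fixes x\<^sub>0 x\<^sub>1 x' v G\<^sub>0 G\<^sub>1 :: "'a::real_inner"
  assumes "convex X"
    and "convex_on X f\<^sub>0" and "GDERIV f\<^sub>0 x\<^sub>0 :> G\<^sub>0"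
    and "convex_on X f\<^sub>1" and "GDERIV f\<^sub>1 x\<^sub>1 :> G\<^sub>1"
    and "x\<^sub>0 \<in> X" and "x\<^sub>1 \<in> X" and "v \<in> X"
    and linear_min: "G\<^sub>0 \<bullet> x' \<le> G\<^sub>0 \<bullet> v"
    and step: "x\<^sub>1 = (1 - \<eta>) *\<^sub>R x\<^sub>0 + \<eta> *\<^sub>R x'" and "0 \<le> \<eta>"
    and diam: "norm (x' - x\<^sub>0) \<le> D"
  shows "f\<^sub>1 x\<^sub>1 - f\<^sub>1 x\<^sub>0 \<le> \<eta> * (f\<^sub>0 v - f\<^sub>0 x\<^sub>0 + D * norm (G\<^sub>1 - G\<^sub>0))"
proof -
  have tangent\<^sub>1: "f\<^sub>1 x\<^sub>1 - f\<^sub>1 x\<^sub>0 \<le> \<eta> * (G\<^sub>1 \<bullet> (x' - x\<^sub>0))"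
  proof -
    have "x\<^sub>0 - x\<^sub>1 = - \<eta> *\<^sub>R (x' - x\<^sub>0)"
      using step by (simp add: algebra_simps)
    then show ?thesis
      using convex_on_above_tangent_gderiv[of X f\<^sub>1 x\<^sub>1 x\<^sub>0 G\<^sub>1] assms by simp
  qed
  have "(G\<^sub>1 - G\<^sub>0) \<bullet> (x' - x\<^sub>0) \<le> norm (G\<^sub>1 - G\<^sub>0) * norm (x' - x\<^sub>0)"
    by (rule norm_cauchy_schwarz)
  also have "\<dots> \<le> D * norm (G\<^sub>1 - G\<^sub>0)"
    using diam by (simp add: mult.commute[of D] mult_left_mono)
  finally have gradient_change: "G\<^sub>1 \<bullet> (x' - x\<^sub>0) \<le> G\<^sub>0 \<bullet> (x' - x\<^sub>0) + D * norm (G\<^sub>1 - G\<^sub>0)"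
    by (simp add: inner_diff_left)
  have "G\<^sub>0 \<bullet> (x' - x\<^sub>0) \<le> G\<^sub>0 \<bullet> (v - x\<^sub>0)"
    using linear_min by (simp add: inner_diff_right)
  also have "\<dots> \<le> f\<^sub>0 v - f\<^sub>0 x\<^sub>0"
    using convex_on_above_tangent_gderiv[of X f\<^sub>0 x\<^sub>0 v G\<^sub>0] assms by simp
  finally have "G\<^sub>1 \<bullet> (x' - x\<^sub>0) \<le> f\<^sub>0 v - f\<^sub>0 x\<^sub>0 + D * norm (G\<^sub>1 - G\<^sub>0)"
    using gradient_change by simp
  then show ?thesis
    using tangent\<^sub>1 mult_left_mono[OF _ \<open>0 \<le> \<eta>\<close>] by (meson order_trans)
qed

theorem lemma1:
  fixes X :: "(real ^ 'n) set" and D \<eta> :: real and T :: nat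
    and f :: "nat \<Rightarrow> real ^ 'n \<Rightarrow> real"
    and g :: "nat \<Rightarrow> real ^ 'n \<Rightarrow> real ^ 'n"
    and x x' v :: "nat \<Rightarrow> real ^ 'n"
  assumes "convex X" and "compact X" and "0 \<in> X"
    and "\<forall>y\<in>X. \<forall>z\<in>X. norm (y - z) \<le> D"
    and "\<forall>t\<le>T. convex_on X (f t)"
    and "\<forall>t\<le>T. \<forall>y\<in>X. GDERIV (f t) y :> g t y"
    and "0 < \<eta>" and "\<eta> \<le> 1"
    and "x 0 \<in> X"
    and "\<forall>t<T. x' t \<in> X \<and> (\<forall>y\<in>X. g t (x t) \<bullet> x' t \<le> g t (x t) \<bullet> y)"
    and "\<forall>t<T. x (Suc t) = (1 - \<eta>) *\<^sub>R x t + \<eta> *\<^sub>R x' t"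
    and "\<forall>t\<le>T. v t \<in> X"
    and "t \<in> {1..T}"
  shows "f t (x t) - f t (v t)
    \<le> (SUP y\<in>X. \<bar>f t y - f (t - 1) y\<bar>)
      + (1 - \<eta>) * (f (t - 1) (x (t - 1)) - f (t - 1) (v (t - 1)))
      + f (t - 1) (v (t - 1)) - f t (v t)
      + \<eta> * D * norm (g t (x t) - g (t - 1) (x (t - 1)))"
proof -
  obtain s where t: "t = Suc s" and "s < T"
    using assms(13) by (cases t) auto
  have x_in: "x k \<in> X" if "k \<le> T" for k
    using convex_iterates_in[of X x \<eta> T x'] assms that by simp
  have "f t (x t) - f t (x s) \<le> \<eta> * (f s (v s) - f s (x s) + D * norm (g t (x t) - g s (x s)))"
    using assms \<open>s < T\<close> x_in[of s] x_in[of t]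
    by (intro frank_wolfe_step[of X "f s" "x s" "g s (x s)" "f t" "x t" "g t (x t)" "v s" "x' s"])
      (auto simp: t)
  moreover have "f t (x s) - f s (x s) \<le> (SUP y\<in>X. \<bar>f t y - f s y\<bar>)"
  proof -
    have "continuous_on X (f k)" if "k \<le> T" for k
      using assms(6) that
      by (intro has_derivative_continuous_on) (auto simp: gderiv_def intro: has_derivative_at_withinI)
    then have "continuous_on X (\<lambda>y. \<bar>f t y - f s y\<bar>)"
      using \<open>s < T\<close> t by (intro continuous_intros) auto
    then show ?thesis
      using continuous_on_compact_le_SUP[OF assms(2)] x_in[of s] \<open>s < T\<close> by fastforce
  qed
  ultimately show ?thesis
    by (simp add: t algebra_simps)
qed

end
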